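(* Consider the utility-minus-cost problem $$\max_{\boldsymbol{r},\boldsymbol{\phi}}\ \sum_{i\in\mathcal{V}}\sum_{a\in\mathcal{A}}U_{ia}(r_i(a))-\sum_{(i,j)\in\mathcal{E}}D_{ij}(F_{ij})-\sum_{i\in\mathcal{V}}C_i(G_i)\quad\text{s.t. } 0\le r_i(a)\le\bar r_i(a),\ \boldsymbol{r}\in\mathcal{D}_{\boldsymbol{r}},\ \boldsymbol{\phi}\in\mathcal{D}_{\boldsymbol{\phi}}(\boldsymbol{r}),$$ reparametrized by admission fractions $\phi_{i^Vi}(a),\phi_{i^Vd_a}(a)\ge0$ with $\phi_{i^Vi}(a)+\phi_{i^Vd_a}(a)=1$ and $r_i(a)=\phi_{i^Vi}(a)\,\bar r_i(a)$. Let $(\boldsymbol{r},\boldsymbol{\phi})$ with admission fractions be feasible. If $\boldsymbol{\phi}$ satisfies condition (SC) (for input $\boldsymbol{r}$), and for all $i\in\mathcal{V}$ and $a\in\mathcal{A}$, $$\frac{\partial T}{\partial t_i(a,0)}\le U'_{ia}(r_i(a))\ \text{ if }\phi_{i^Vi}(a)>0,\qquad \frac{\partial T}{\partial t_i(a,0)}\ge U'_{ia}(r_i(a))\ \text{ if }\phi_{i^Vd_a}(a)>0,$$ then $(\boldsymbol{r},\boldsymbol{\phi})$ is a global optimal solution of the utility-minus-cost problem.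
   Context: Service-chain computing network model. $\mathcal{G}=(\mathcal{V},\mathcal{E})$ is a directed, strongly connected graph whose links are bidirectional ($(i,j)\in\mathcal{E}\Rightarrow(j,i)\in\mathcal{E}$). $\mathcal{A}$ is a finite set of applications; application $a$ has a destination $d_a\in\mathcal{V}$ and a chain of $|\mathcal{T}_a|$ tasks performed in order. The set of stages is $\mathcal{S}=\{(a,k): a\in\mathcal{A}, k=0,1,\dots,|\mathcal{T}_a|\}$; stage $(a,k)$ denotes packets that have completed the first $k$ tasks of $a$, and has packet size $L_{(a,k)}>0$. Exogenous input rates are $r_i(a)\ge 0$ (stage $(a,0)$ packets injected at node $i$), $\boldsymbol{r}=[r_i(a)]$. The forwarding strategy $\boldsymbol{\phi}=[\phi_{ij}(a,k)]_{(a,k)\in\mathcal{S},i\in\mathcal{V},j\in\{0\}\cup\mathcal{V}}$ has $\phi_{ij}(a,k)\in[0,1]$; for $j\in\mathcal{V}$ it is the fraction of node $i$'s stage-$(a,k)$ traffic sent to node $j$ (with $\phi_{ij}(a,k)=0$ if $(i,j)\notin\mathcal{E}$), and $\phi_{i0}(a,k)$ is the fraction sent to $i$'s local processor, which converts each stage-$(a,k)$ packet into one stage-$(a,k+1)$ packet; $\phi_{i0}(a,|\mathcal{T}_a|)=0$. Flow conservation: $\sum_{j\in\{0\}\cup\mathcal{V}}\phi_{ij}(a,k)=0$ if $k=|\mathcal{T}_a|$ and $i=d_a$, and $=1$ otherwise. Traffic $t_i(a,k)$ satisfies $t_i(a,0)=\sum_{j\in\mathcal{V}}t_j(a,0)\phi_{ji}(a,0)+r_i(a)$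 and, for $k\ge1$, $t_i(a,k)=\sum_{j\in\mathcal{V}}t_j(a,k)\phi_{ji}(a,k)+t_i(a,k-1)\phi_{i0}(a,k-1)$. Link flows $f_{ij}(a,k)=t_i(a,k)\phi_{ij}(a,k)$, processor inputs $g_i(a,k)=t_i(a,k)\phi_{i0}(a,k)$, total link flow $F_{ij}=\sum_{(a,k)\in\mathcal{S}}L_{(a,k)}f_{ij}(a,k)$, computation workload $G_i=\sum_{(a,k)\in\mathcal{S}}w_i(a,k)g_i(a,k)$ with weights $w_i(a,k)>0$. Link costs $D_{ij}(\cdot)$ and computation costs $C_i(\cdot)$ are increasing, continuously differentiable, convex functions (possibly taking value $+\infty$ outside a domain). Total cost $T(\boldsymbol{\phi})=\sum_{(i,j)\in\mathcal{E}}D_{ij}(F_{ij})+\sum_{i\in\mathcal{V}}C_i(G_i)$. The feasible set $\mathcal{D}_{\boldsymbol{\phi}}(\boldsymbol{r})$ consists of $\boldsymbol{\phi}$ satisfying flow conservation with all $D_{ij}(F_{ij})<\infty$ and $C_i(G_i)<\infty$; $\mathcal{D}_{\boldsymbol{r}}=\{\boldsymbol{r}\ge0:\mathcal{D}_{\boldsymbol{\phi}}(\boldsymbol{r})\neq\emptyset\}$. Marginal quantities: $\partial T/\partial t_i(a,k)$ is the marginal total cost of an additional exogenous injection of stage-$(a,k)$ traffic at node $i$ (with $\boldsymbol{\phi}$ fixed); it satisfies $\partial T/\partial t_{d_a}(a,|\mathcal{T}_a|)=0$, for $k=|\mathcal{T}_a|$: $\frac{\partial T}{\partial t_i(a,k)}=\sum_{j\in\mathcal{V}}\phi_{ij}(a,k)\big(L_{(a,k)}D'_{ij}(F_{ij})+\frac{\partial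 T}{\partial t_j(a,k)}\big)$, and for $k<|\mathcal{T}_a|$: $\frac{\partial T}{\partial t_i(a,k)}=\phi_{i0}(a,k)\big(w_i(a,k)C'_i(G_i)+\frac{\partial T}{\partial t_i(a,k+1)}\big)+\sum_{j\in\mathcal{V}}\phi_{ij}(a,k)\big(L_{(a,k)}D'_{ij}(F_{ij})+\frac{\partial T}{\partial t_j(a,k)}\big)$. Modified marginals: $\delta_{ij}(a,k)=L_{(a,k)}D'_{ij}(F_{ij})+\frac{\partial T}{\partial t_j(a,k)}$ for $j\in\mathcal{V}$ with $(i,j)\in\mathcal{E}$, $\delta_{i0}(a,k)=w_i(a,k)C'_i(G_i)+\frac{\partial T}{\partial t_i(a,k+1)}$ for $k<|\mathcal{T}_a|$, and $\delta_{ij}(a,k)=\infty$ for $(i,j)\notin\mathcal{E}$ and $\delta_{i0}(a,|\mathcal{T}_a|)=\infty$. Condition (SC): for all $i\in\mathcal{V}$, $j\in\{0\}\cup\mathcal{V}$, $(a,k)\in\mathcal{S}$, $\delta_{ij}(a,k)=\min_{j'\in\{0\}\cup\mathcal{V}}\delta_{ij'}(a,k)$ if $\phi_{ij}(a,k)>0$ and $\delta_{ij}(a,k)\ge\min_{j'}\delta_{ij'}(a,k)$ if $\phi_{ij}(a,k)=0$. Congestion control: each pair $(i,a)$ has a user-specified upper limit $\bar r_i(a)\ge0$ on the admitted rate and a utility function $U_{ia}:[0,\bar r_i(a)]\to\mathbb{R}$ that is increasing, concave, continuously differentiable, with $U_{ia}(0)=0$. A virtual gateway node $i^V$ receives rate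 $\bar r_i(a)$; the fraction $\phi_{i^Vi}(a)$ is admitted to physical node $i$ (so $r_i(a)=\phi_{i^Vi}(a)\bar r_i(a)$), the fraction $\phi_{i^Vd_a}(a)$ is rejected, incurring cost $U_{ia}(\bar r_i(a))-U_{ia}(r_i(a))$. *)

theory Defs
  imports "HOL-Analysis.Analysis"
begin

text \<open>Applications: a finite set A (elements of type 'a); d a is the destination,
  K a = |T_a| the number of tasks; the stages are (a,k) with a in A, k \<le> K a.
  Forwarding strategy: phi i (Some j) a k = phi_ij(a,k) (fraction to neighbour j),
  phi i None a k = phi_i0(a,k) (fraction to the local processor).
  Packet sizes L a k = L_(a,k); computation weights w i a k = w_i(a,k).\<close>

definition graph_ok :: "'v set \<Rightarrow> ('v \<times> 'v) set \<Rightarrow> bool" where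
  "graph_ok V E \<longleftrightarrow> finite V \<and> E \<subseteq> V \<times> V
     \<and> (\<forall>i j. (i, j) \<in> E \<longrightarrow> (j, i) \<in> E)
     \<and> (\<forall>i\<in>V. \<forall>j\<in>V. (i, j) \<in> E\<^sup>*)"

definition flow_cons ::
  "'v set \<Rightarrow> ('v \<times> 'v) set \<Rightarrow> 'a set \<Rightarrow> ('a \<Rightarrow> 'v) \<Rightarrow> ('a \<Rightarrow> nat)
   \<Rightarrow> ('v \<Rightarrow> 'v option \<Rightarrow> 'a \<Rightarrow> nat \<Rightarrow> real) \<Rightarrow> bool" where
  "flow_cons V E A d K phi \<longleftrightarrow>
     (\<forall>a\<in>A. \<forall>k\<le>K a. \<forall>i\<in>V.
        (\<forall>j\<in>V. 0 \<le> phi i (Some j) a k \<and> phi i (Some j) a k \<le> 1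
                \<and> ((i, j) \<notin> E \<longrightarrow> phi i (Some j) a k = 0))
      \<and> 0 \<le> phi i None a k \<and> phi i None a k \<le> 1
      \<and> (k = K a \<longrightarrow> phi i None a k = 0)
      \<and> phi i None a k + (\<Sum>j\<in>V. phi i (Some j) a k)
          = (if k = K a \<and> i = d a then 0 else 1))"

definition traffic ::
  "'v set \<Rightarrow> 'a set \<Rightarrow> ('a \<Rightarrow> nat) \<Rightarrow> ('v \<Rightarrow> 'v option \<Rightarrow> 'a \<Rightarrow> nat \<Rightarrow> real)
   \<Rightarrow> ('v \<Rightarrow> 'a \<Rightarrow> real) \<Rightarrow> ('v \<Rightarrow> 'a \<Rightarrow> nat \<Rightarrow> real) \<Rightarrow> bool" where
  "traffic V A K phi r t \<longleftrightarrow>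
     (\<forall>a\<in>A. \<forall>i\<in>V.
        (\<forall>k\<le>K a. 0 \<le> t i a k)
      \<and> t i a 0 = (\<Sum>j\<in>V. t j a 0 * phi j (Some i) a 0) + r i a
      \<and> (\<forall>k. 1 \<le> k \<and> k \<le> K a \<longrightarrow>
            t i a k = (\<Sum>j\<in>V. t j a k * phi j (Some i) a k)
                      + t i a (k - 1) * phi i None a (k - 1)))"

definition link_flow ::
  "'a set \<Rightarrow> ('a \<Rightarrow> nat) \<Rightarrow> ('a \<Rightarrow> nat \<Rightarrow> real)
   \<Rightarrow> ('v \<Rightarrow> 'v option \<Rightarrow> 'a \<Rightarrow> nat \<Rightarrow> real) \<Rightarrow> ('v \<Rightarrow> 'a \<Rightarrow> nat \<Rightarrow> real)
   \<Rightarrow> 'v \<Rightarrow> 'v \<Rightarrow> real" where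
  "link_flow A K L phi t i j = (\<Sum>a\<in>A. \<Sum>k\<le>K a. L a k * (t i a k * phi i (Some j) a k))"

definition comp_load ::
  "'a set \<Rightarrow> ('a \<Rightarrow> nat) \<Rightarrow> ('v \<Rightarrow> 'a \<Rightarrow> nat \<Rightarrow> real)
   \<Rightarrow> ('v \<Rightarrow> 'v option \<Rightarrow> 'a \<Rightarrow> nat \<Rightarrow> real) \<Rightarrow> ('v \<Rightarrow> 'a \<Rightarrow> nat \<Rightarrow> real)
   \<Rightarrow> 'v \<Rightarrow> real" where
  "comp_load A K w phi t i = (\<Sum>a\<in>A. \<Sum>k\<le>K a. w i a k * (t i a k * phi i None a k))"

definition total_cost ::
  "'v set \<Rightarrow> ('v \<times> 'v) set \<Rightarrow> 'a set \<Rightarrow> ('a \<Rightarrow> nat) \<Rightarrow> ('a \<Rightarrow> nat \<Rightarrow> real)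
   \<Rightarrow> ('v \<Rightarrow> 'a \<Rightarrow> nat \<Rightarrow> real) \<Rightarrow> ('v \<Rightarrow> 'v \<Rightarrow> real \<Rightarrow> real) \<Rightarrow> ('v \<Rightarrow> real \<Rightarrow> real)
   \<Rightarrow> ('v \<Rightarrow> 'v option \<Rightarrow> 'a \<Rightarrow> nat \<Rightarrow> real) \<Rightarrow> ('v \<Rightarrow> 'a \<Rightarrow> nat \<Rightarrow> real) \<Rightarrow> real" where
  "total_cost V E A K L w D C phi t =
     (\<Sum>(i, j)\<in>E. D i j (link_flow A K L phi t i j)) + (\<Sum>i\<in>V. C i (comp_load A K w phi t i))"

text \<open>A cost function with effective domain S (value +infinity outside S):
  S is an interval, f is convex and increasing on S, and continuously
  differentiable on S with derivative f'.\<close>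
definition cost_function :: "real set \<Rightarrow> (real \<Rightarrow> real) \<Rightarrow> (real \<Rightarrow> real) \<Rightarrow> bool" where
  "cost_function S f f' \<longleftrightarrow> is_interval S \<and> convex_on S f \<and> mono_on S f
     \<and> (\<forall>x\<in>S. (f has_real_derivative f' x) (at x within S)) \<and> continuous_on S f'"

definition feasible ::
  "'v set \<Rightarrow> ('v \<times> 'v) set \<Rightarrow> 'a set \<Rightarrow> ('a \<Rightarrow> 'v) \<Rightarrow> ('a \<Rightarrow> nat) \<Rightarrow> ('a \<Rightarrow> nat \<Rightarrow> real)
   \<Rightarrow> ('v \<Rightarrow> 'a \<Rightarrow> nat \<Rightarrow> real) \<Rightarrow> ('v \<Rightarrow> 'v \<Rightarrow> real set) \<Rightarrow> ('v \<Rightarrow> real set)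
   \<Rightarrow> ('v \<Rightarrow> 'a \<Rightarrow> real) \<Rightarrow> ('v \<Rightarrow> 'v option \<Rightarrow> 'a \<Rightarrow> nat \<Rightarrow> real)
   \<Rightarrow> ('v \<Rightarrow> 'a \<Rightarrow> nat \<Rightarrow> real) \<Rightarrow> bool" where
  "feasible V E A d K L w Ddom Cdom r phi t \<longleftrightarrow>
     flow_cons V E A d K phi \<and> traffic V A K phi r t
     \<and> (\<forall>(i, j)\<in>E. link_flow A K L phi t i j \<in> Ddom i j)
     \<and> (\<forall>i\<in>V. comp_load A K w phi t i \<in> Cdom i)"

definition utility_function :: "real \<Rightarrow> (real \<Rightarrow> real) \<Rightarrow> (real \<Rightarrow> real) \<Rightarrow> bool" where
  "utility_function rb U U' \<longleftrightarrow> U 0 = 0 \<and> mono_on {0..rb} U \<and> concave_on {0..rb} U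
     \<and> (\<forall>x\<in>{0..rb}. (U has_real_derivative U' x) (at x within {0..rb}))
     \<and> continuous_on {0..rb} U'"

text \<open>p i a k = dT/dt_i(a,k): the marginal cost recursion for strategy phi,
  with Dd i j = D'_ij, Cd i = C'_i.\<close>
definition marginals ::
  "'v set \<Rightarrow> 'a set \<Rightarrow> ('a \<Rightarrow> 'v) \<Rightarrow> ('a \<Rightarrow> nat) \<Rightarrow> ('a \<Rightarrow> nat \<Rightarrow> real)
   \<Rightarrow> ('v \<Rightarrow> 'a \<Rightarrow> nat \<Rightarrow> real) \<Rightarrow> ('v \<Rightarrow> 'v \<Rightarrow> real \<Rightarrow> real) \<Rightarrow> ('v \<Rightarrow> real \<Rightarrow> real)
   \<Rightarrow> ('v \<Rightarrow> 'v option \<Rightarrow> 'a \<Rightarrow> nat \<Rightarrow> real) \<Rightarrow> ('v \<Rightarrow> 'a \<Rightarrow> nat \<Rightarrow> real)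
   \<Rightarrow> ('v \<Rightarrow> 'a \<Rightarrow> nat \<Rightarrow> real) \<Rightarrow> bool" where
  "marginals V A d K L w Dd Cd phi t p \<longleftrightarrow>
     (\<forall>a\<in>A. \<forall>i\<in>V.
        p i a (K a) = (if i = d a then 0 else
           (\<Sum>j\<in>V. phi i (Some j) a (K a)
                    * (L a (K a) * Dd i j (link_flow A K L phi t i j) + p j a (K a))))
      \<and> (\<forall>k<K a. p i a k =
           phi i None a k * (w i a k * Cd i (comp_load A K w phi t i) + p i a (k + 1))
           + (\<Sum>j\<in>V. phi i (Some j) a k
                    * (L a k * Dd i j (link_flow A K L phi t i j) + p j a k))))"

definition delta ::
  "('v \<times> 'v) set \<Rightarrow> 'a set \<Rightarrow> ('a \<Rightarrow> nat) \<Rightarrow> ('a \<Rightarrow> nat \<Rightarrow> real)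
   \<Rightarrow> ('v \<Rightarrow> 'a \<Rightarrow> nat \<Rightarrow> real) \<Rightarrow> ('v \<Rightarrow> 'v \<Rightarrow> real \<Rightarrow> real) \<Rightarrow> ('v \<Rightarrow> real \<Rightarrow> real)
   \<Rightarrow> ('v \<Rightarrow> 'v option \<Rightarrow> 'a \<Rightarrow> nat \<Rightarrow> real) \<Rightarrow> ('v \<Rightarrow> 'a \<Rightarrow> nat \<Rightarrow> real)
   \<Rightarrow> ('v \<Rightarrow> 'a \<Rightarrow> nat \<Rightarrow> real) \<Rightarrow> 'v \<Rightarrow> 'v option \<Rightarrow> 'a \<Rightarrow> nat \<Rightarrow> ereal" where
  "delta E A K L w Dd Cd phi t p i jo a k =
     (case jo of
        Some j \<Rightarrow> (if (i, j) \<in> E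
                   then ereal (L a k * Dd i j (link_flow A K L phi t i j) + p j a k)
                   else \<infinity>)
      | None \<Rightarrow> (if k < K a
                 then ereal (w i a k * Cd i (comp_load A K w phi t i) + p i a (k + 1))
                 else \<infinity>))"

definition cond_SC ::
  "'v set \<Rightarrow> ('v \<times> 'v) set \<Rightarrow> 'a set \<Rightarrow> ('a \<Rightarrow> nat) \<Rightarrow> ('a \<Rightarrow> nat \<Rightarrow> real)
   \<Rightarrow> ('v \<Rightarrow> 'a \<Rightarrow> nat \<Rightarrow> real) \<Rightarrow> ('v \<Rightarrow> 'v \<Rightarrow> real \<Rightarrow> real) \<Rightarrow> ('v \<Rightarrow> real \<Rightarrow> real)
   \<Rightarrow> ('v \<Rightarrow> 'v option \<Rightarrow> 'a \<Rightarrow> nat \<Rightarrow> real) \<Rightarrow> ('v \<Rightarrow> 'a \<Rightarrow> nat \<Rightarrow> real)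
   \<Rightarrow> ('v \<Rightarrow> 'a \<Rightarrow> nat \<Rightarrow> real) \<Rightarrow> bool" where
  "cond_SC V E A K L w Dd Cd phi t p \<longleftrightarrow>
     (\<forall>a\<in>A. \<forall>k\<le>K a. \<forall>i\<in>V. \<forall>jo\<in>insert None (Some ` V).
        let m = Min ((\<lambda>j'. delta E A K L w Dd Cd phi t p i j' a k) ` insert None (Some ` V))
        in (phi i jo a k > 0 \<longrightarrow> delta E A K L w Dd Cd phi t p i jo a k = m)
         \<and> (phi i jo a k = 0 \<longrightarrow> delta E A K L w Dd Cd phi t p i jo a k \<ge> m))"

definition objective ::
  "'v set \<Rightarrow> ('v \<times> 'v) set \<Rightarrow> 'a set \<Rightarrow> ('a \<Rightarrow> nat) \<Rightarrow> ('a \<Rightarrow> nat \<Rightarrow> real)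
   \<Rightarrow> ('v \<Rightarrow> 'a \<Rightarrow> nat \<Rightarrow> real) \<Rightarrow> ('v \<Rightarrow> 'v \<Rightarrow> real \<Rightarrow> real) \<Rightarrow> ('v \<Rightarrow> real \<Rightarrow> real)
   \<Rightarrow> ('v \<Rightarrow> 'a \<Rightarrow> real \<Rightarrow> real)
   \<Rightarrow> ('v \<Rightarrow> 'a \<Rightarrow> real) \<Rightarrow> ('v \<Rightarrow> 'v option \<Rightarrow> 'a \<Rightarrow> nat \<Rightarrow> real)
   \<Rightarrow> ('v \<Rightarrow> 'a \<Rightarrow> nat \<Rightarrow> real) \<Rightarrow> real" where
  "objective V E A K L w D C U r phi t =
     (\<Sum>i\<in>V. \<Sum>a\<in>A. U i a (r i a)) - total_cost V E A K L w D C phi t"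

end

theory Submission
  imports Defs
begin

(* The objective is concave, so it suffices to compare first-order expansions at the given
   point. Price links by D'(F) and processors by C'(G) at the flows of phi. Along the traffic
   equations the resulting linearised cost of any feasible (r', phi', t') telescopes into
   the sum of p_i(a,0) r'_i(a) plus the traffic t' weighted by the excess of the one-hop marginal
   cost under phi' over p. That one-hop marginal is a convex combination of the modified marginals
   delta, and by (SC) phi only uses minimisers of delta, so the excess vanishes for phi and is
   nonnegative for phi'. Hence the cost grows at least by the sum of p_i(a,0) (r'_i(a) - r_i(a)),
   while concavity of U and the admission and rejection conditions bound the utility gain by the
   same amount. *)

(* Unlike convex_on_imp_above_tangent, c may lie on the boundary of S, with a one-sided derivative. *)
lemma convex_on_imp_above_tangent_within:
  fixes f :: "real \<Rightarrow> real"
  assumes convex: "convex_on S f" and S: "convex S"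
    and c: "c \<in> S" and x: "x \<in> S"
    and deriv: "(f has_real_derivative f') (at c within S)"
  shows "f' * (x - c) \<le> f x - f c"
proof (cases "x = c")
  case False
  let ?seg = "open_segment c x"
  have seg: "?seg \<subseteq> S"
    using S c x by (simp add: convex_contains_open_segment)
  have "c \<notin> ?seg"
    by (simp add: open_segment_def)
  then have "at c within ?seg \<noteq> bot"
    using False by (simp add: at_within_eq_bot_iff Diff_triv)
  moreover have "((\<lambda>y. (f y - f c) / (y - c)) \<longlongrightarrow> f') (at c within ?seg)"
    using deriv unfolding has_field_derivative_iff by (rule tendsto_mono[OF at_le[OF seg]])
  then have "((\<lambda>y. (f y - f c) / (y - c) * (x - c)) \<longlongrightarrow> f' * (x - c)) (at c within ?seg)"
    by (rule tendsto_mult_right)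
  moreover have "\<forall>\<^sub>F y in at c within ?seg. (f y - f c) / (y - c) * (x - c) \<le> f x - f c"
    unfolding eventually_at_filter
  proof (intro always_eventually allI impI)
    fix y assume "y \<in> ?seg"
    then obtain u where u: "0 < u" "u < 1" and y: "y = (1 - u) * c + u * x"
      by (auto simp: in_segment)
    have "f y \<le> (1 - u) * f c + u * f x"
      using convex_onD[OF convex, of u c x] u c x y by simp
    then have "f y - f c \<le> u * (f x - f c)"
      by (simp add: algebra_simps)
    moreover have "y - c = u * (x - c)"
      using y by (simp add: algebra_simps)
    ultimately show "(f y - f c) / (y - c) * (x - c) \<le> f x - f c"
      using False u by (simp add: pos_divide_le_eq mult.commute)
  qed
  ultimately show ?thesis
    by (simp add: tendsto_upperbound)
qed simp

lemma concave_on_increment_le_price: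
  fixes U U' :: "real \<Rightarrow> real"
  assumes concave: "concave_on {lo..hi} U"
    and deriv: "\<forall>x\<in>{lo..hi}. (U has_real_derivative U' x) (at x within {lo..hi})"
    and x: "x \<in> {lo..hi}" and y: "y \<in> {lo..hi}"
    and below: "lo < x \<Longrightarrow> \<pi> \<le> U' x" and above: "x < hi \<Longrightarrow> U' x \<le> \<pi>"
  shows "U y - U x \<le> \<pi> * (y - x)"
proof -
  have "- U' x * (y - x) \<le> - U y - - U x"
    using concave deriv x y unfolding concave_on_def
    by (intro convex_on_imp_above_tangent_within[where S = "{lo..hi}"]) (auto intro: DERIV_minus)
  moreover have "U' x * (y - x) \<le> \<pi> * (y - x)"
  proof (cases y x rule: linorder_cases)
    case less
    then show ?thesis
      using x y below by (auto intro: mult_right_mono_neg)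
  next
    case greater
    then show ?thesis
      using x y above by (auto intro: mult_right_mono)
  qed simp
  ultimately show ?thesis
    by simp
qed

lemma convex_combination_of_minimisers_le:
  fixes \<delta> :: "'j \<Rightarrow> ereal" and v x x' :: "'j \<Rightarrow> real"
  assumes J: "finite J"
    and x: "\<forall>j\<in>J. 0 \<le> x j" "sum x J = 1" and x': "\<forall>j\<in>J. 0 \<le> x' j" "sum x' J = 1"
    and min: "\<forall>j\<in>J. 0 < x j \<longrightarrow> \<delta> j = Min (\<delta> ` J)"
    and finite_val: "\<forall>j\<in>J. x j \<noteq> 0 \<or> x' j \<noteq> 0 \<longrightarrow> \<delta> j = ereal (v j)"
  shows "(\<Sum>j\<in>J. x j * v j) \<le> (\<Sum>j\<in>J. x' j * v j)"
proof -
  obtain j0 where j0: "j0 \<in> J" "x j0 \<noteq> 0"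
    using x(2) by (metis sum.neutral zero_neq_one)
  define m where "m = v j0"
  have Min: "Min (\<delta> ` J) = ereal m"
    using min finite_val x(1) j0 unfolding m_def by (metis less_eq_real_def)
  have "(\<Sum>j\<in>J. x j * v j) = (\<Sum>j\<in>J. x j * m)"
    using min finite_val x(1) Min by (intro sum.cong) (auto simp: less_eq_real_def)
  also have "\<dots> = m"
    using x(2) by (simp add: sum_distrib_right[symmetric])
  also have "\<dots> = (\<Sum>j\<in>J. x' j * m)"
    using x'(2) by (simp add: sum_distrib_right[symmetric])
  also have "\<dots> \<le> (\<Sum>j\<in>J. x' j * v j)"
  proof (intro sum_mono)
    fix j assume "j \<in> J"
    have "x' j \<noteq> 0 \<Longrightarrow> m \<le> v j"
      using finite_val Min Min_le[OF finite_imageI[OF J] imageI[OF \<open>j \<in> J\<close>], of \<delta>] \<open>j \<in> J\<close>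
      by auto
    then show "x' j * m \<le> x' j * v j"
      using x'(1) \<open>j \<in> J\<close> by (cases "x' j = 0") (auto intro: mult_left_mono)
  qed
  finally show ?thesis .
qed

lemma cost_function_above_tangent:
  "cost_function S f f' \<Longrightarrow> x \<in> S \<Longrightarrow> y \<in> S \<Longrightarrow> f' x * (y - x) \<le> f y - f x"
  unfolding cost_function_def
  by (blast intro: convex_on_imp_above_tangent_within is_interval_convex)

lemma admission_utility_increment_le:
  assumes util: "utility_function rb U U'" and rb: "0 \<le> rb"
    and adm: "0 \<le> \<phi>V" "0 \<le> \<phi>R" "\<phi>V + \<phi>R = 1" "r = \<phi>V * rb"
    and r': "r' \<in> {0..rb}"
    and admit: "0 < \<phi>V \<Longrightarrow> \<pi> \<le> U' r" and reject: "0 < \<phi>R \<Longrightarrow> U' r \<le> \<pi>"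
  shows "U r' - U r \<le> \<pi> * (r' - r)"
proof (rule concave_on_increment_le_price)
  show "concave_on {0..rb} U" "\<forall>x\<in>{0..rb}. (U has_real_derivative U' x) (at x within {0..rb})"
    using util unfolding utility_function_def by auto
  show "r \<in> {0..rb}"
    using adm rb by (simp add: mult_left_le_one_le)
  show "0 < r \<Longrightarrow> \<pi> \<le> U' r"
    using adm admit by (auto simp: zero_less_mult_iff)
  show "r < rb \<Longrightarrow> U' r \<le> \<pi>"
    using adm reject by (cases "0 < \<phi>R") auto
qed (use r' in auto)

abbreviation hops :: "'v set \<Rightarrow> 'v option set" where
  "hops V \<equiv> insert None (Some ` V)"

(* The finite values of delta, for link prices \<alpha> and processor prices \<beta>. *)
definition hop_marginal ::
  "('a \<Rightarrow> nat \<Rightarrow> real) \<Rightarrow> ('v \<Rightarrow> 'a \<Rightarrow> nat \<Rightarrow> real) \<Rightarrow> ('v \<Rightarrow> 'v \<Rightarrow> real) \<Rightarrow> ('v \<Rightarrow> real)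
   \<Rightarrow> ('v \<Rightarrow> 'a \<Rightarrow> nat \<Rightarrow> real) \<Rightarrow> 'v \<Rightarrow> 'v option \<Rightarrow> 'a \<Rightarrow> nat \<Rightarrow> real" where
  "hop_marginal L w \<alpha> \<beta> p i jo a k =
     (case jo of Some j \<Rightarrow> L a k * \<alpha> i j + p j a k | None \<Rightarrow> w i a k * \<beta> i + p i a (k + 1))"

(* The marginal cost of stage-(a,k) traffic at i when it makes one hop according to ph and is
   priced by p afterwards; for ph = phi this is the right-hand side of the marginal recursion. *)
definition stage_marginal ::
  "'v set \<Rightarrow> ('a \<Rightarrow> nat \<Rightarrow> real) \<Rightarrow> ('v \<Rightarrow> 'a \<Rightarrow> nat \<Rightarrow> real) \<Rightarrow> ('v \<Rightarrow> 'v \<Rightarrow> real)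
   \<Rightarrow> ('v \<Rightarrow> real) \<Rightarrow> ('v \<Rightarrow> 'a \<Rightarrow> nat \<Rightarrow> real) \<Rightarrow> ('v \<Rightarrow> 'v option \<Rightarrow> 'a \<Rightarrow> nat \<Rightarrow> real)
   \<Rightarrow> 'v \<Rightarrow> 'a \<Rightarrow> nat \<Rightarrow> real" where
  "stage_marginal V L w \<alpha> \<beta> p ph i a k =
     (\<Sum>jo\<in>hops V. ph i jo a k * hop_marginal L w \<alpha> \<beta> p i jo a k)"

lemma stage_marginal_expand:
  "finite V \<Longrightarrow> stage_marginal V L w \<alpha> \<beta> p ph i a k =
     (\<Sum>j\<in>V. ph i (Some j) a k * (L a k * \<alpha> i j + p j a k))
     + ph i None a k * (w i a k * \<beta> i + p i a (k + 1))"
  by (simp add: stage_marginal_def sum.reindex hop_marginal_def)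

lemma flow_cons_hop_weights:
  assumes "flow_cons V E A d K ph" "finite V" "a \<in> A" "k \<le> K a" "i \<in> V"
  shows "\<forall>jo\<in>hops V. 0 \<le> ph i jo a k"
    and "(\<Sum>jo\<in>hops V. ph i jo a k) = (if k = K a \<and> i = d a then 0 else 1)"
  using assms by (auto simp: flow_cons_def sum.reindex)

lemma flow_cons_sink_weights:
  assumes "flow_cons V E A d K ph" "finite V" "a \<in> A" "i = d a" "i \<in> V"
    and "jo \<in> hops V"
  shows "ph i jo a (K a) = 0"
proof -
  have "\<forall>jo\<in>hops V. 0 \<le> ph i jo a (K a)" "(\<Sum>jo\<in>hops V. ph i jo a (K a)) = 0"
    using flow_cons_hop_weights[OF assms(1-3) order_refl assms(5)] assms(4) by auto
  then show ?thesis
    using assms(2,6) sum_nonneg_eq_0_iff[of "hops V" "\<lambda>jo. ph i jo a (K a)"] by blast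
qed

lemma delta_eq_hop_marginal:
  assumes "flow_cons V E A d K ph" "a \<in> A" "k \<le> K a" "i \<in> V" "jo \<in> hops V"
    and "ph i jo a k \<noteq> 0"
  shows "delta E A K L w Dd Cd phi t p i jo a k
       = ereal (hop_marginal L w (\<lambda>i j. Dd i j (link_flow A K L phi t i j))
                  (\<lambda>i. Cd i (comp_load A K w phi t i)) p i jo a k)"
  using assms by (auto simp: flow_cons_def delta_def hop_marginal_def split: option.split)

lemma cond_SC_imp_minimiser:
  assumes "cond_SC V E A K L w Dd Cd phi t p" "a \<in> A" "k \<le> K a" "i \<in> V" "jo \<in> hops V"
    and "0 < phi i jo a k"
  shows "delta E A K L w Dd Cd phi t p i jo a k
       = Min ((\<lambda>j'. delta E A K L w Dd Cd phi t p i j' a k) ` hops V)"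
  using assms(1)[unfolded cond_SC_def Let_def, rule_format, OF assms(2-5)] assms(6) by simp

lemma stage_marginal_eq_marginal:
  assumes marg: "marginals V A d K L w Dd Cd phi t p" and fc: "flow_cons V E A d K phi"
    and V: "finite V" and a: "a \<in> A" and k: "k \<le> K a" and i: "i \<in> V"
  shows "stage_marginal V L w (\<lambda>i j. Dd i j (link_flow A K L phi t i j))
           (\<lambda>i. Cd i (comp_load A K w phi t i)) p phi i a k = p i a k"
proof (cases "k = K a")
  case True
  then have "phi i None a k = 0"
    using fc a i unfolding flow_cons_def by auto
  moreover have "phi i jo a k = 0" if "i = d a" "jo \<in> hops V" for jo
    using flow_cons_sink_weights[OF fc V a that(1) i that(2)] True by simp
  ultimately show ?thesis
    using marg a i True V by (auto simp: marginals_def stage_marginal_expand)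
next
  case False
  then show ?thesis
    using marg a i k V by (auto simp: marginals_def stage_marginal_expand)
qed

lemma marginal_le_stage_marginal:
  assumes marg: "marginals V A d K L w Dd Cd phi t p" and SC: "cond_SC V E A K L w Dd Cd phi t p"
    and fc: "flow_cons V E A d K phi" and fc': "flow_cons V E A d K phi'"
    and V: "finite V" and a: "a \<in> A" and k: "k \<le> K a" and i: "i \<in> V"
  defines "\<alpha> \<equiv> \<lambda>i j. Dd i j (link_flow A K L phi t i j)"
    and "\<beta> \<equiv> \<lambda>i. Cd i (comp_load A K w phi t i)"
  shows "p i a k \<le> stage_marginal V L w \<alpha> \<beta> p phi' i a k"
proof (cases "k = K a \<and> i = d a")
  case True
  have "stage_marginal V L w \<alpha> \<beta> p ph i a k = 0" if "flow_cons V E A d K ph" for ph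
    using flow_cons_sink_weights[OF that V a _ i] True by (simp add: stage_marginal_def)
  then show ?thesis
    using stage_marginal_eq_marginal[OF marg fc V a k i] fc fc' unfolding \<alpha>_def \<beta>_def by simp
next
  case False
  let ?\<delta> = "\<lambda>jo. delta E A K L w Dd Cd phi t p i jo a k"
  have "stage_marginal V L w \<alpha> \<beta> p phi i a k \<le> stage_marginal V L w \<alpha> \<beta> p phi' i a k"
    unfolding stage_marginal_def
  proof (rule convex_combination_of_minimisers_le[where \<delta> = ?\<delta>])
    show "finite (hops V)" using V by simp
    show "\<forall>jo\<in>hops V. 0 \<le> phi i jo a k" "(\<Sum>jo\<in>hops V. phi i jo a k) = 1"
      using flow_cons_hop_weights[OF fc V a k i] False by auto
    show "\<forall>jo\<in>hops V. 0 \<le> phi' i jo a k" "(\<Sum>jo\<in>hops V. phi' i jo a k) = 1"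
      using flow_cons_hop_weights[OF fc' V a k i] False by auto
    show "\<forall>jo\<in>hops V. 0 < phi i jo a k \<longrightarrow> ?\<delta> jo = Min (?\<delta> ` hops V)"
      using cond_SC_imp_minimiser[OF SC a k i] by blast
    show "\<forall>jo\<in>hops V. phi i jo a k \<noteq> 0 \<or> phi' i jo a k \<noteq> 0
            \<longrightarrow> ?\<delta> jo = ereal (hop_marginal L w \<alpha> \<beta> p i jo a k)"
      using delta_eq_hop_marginal[OF fc a k i, where phi = phi and t = t and p = p]
        delta_eq_hop_marginal[OF fc' a k i, where phi = phi and t = t and p = p]
      unfolding \<alpha>_def \<beta>_def by blast
  qed
  then show ?thesis
    using stage_marginal_eq_marginal[OF marg fc V a k i] unfolding \<alpha>_def \<beta>_def by simp
qed

lemma traffic_telescope: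
  assumes tr: "traffic V A K ph rr tt" and fc: "flow_cons V E A d K ph" and a: "a \<in> A"
  shows "(\<Sum>k\<le>K a. \<Sum>i\<in>V. p i a k * tt i a k)
    = (\<Sum>k\<le>K a. \<Sum>i\<in>V. tt i a k * (\<Sum>j\<in>V. ph i (Some j) a k * p j a k))
      + (\<Sum>k\<le>K a. \<Sum>i\<in>V. tt i a k * ph i None a k * p i a (k + 1))
      + (\<Sum>i\<in>V. p i a 0 * rr i a)"
proof -
  define inflow where "inflow k = (\<Sum>i\<in>V. p i a k * (\<Sum>j\<in>V. tt j a k * ph j (Some i) a k))" for k
  define processed where "processed k = (\<Sum>i\<in>V. tt i a k * ph i None a k * p i a (k + 1))" for k
  define admitted where "admitted = (\<Sum>i\<in>V. p i a 0 * rr i a)"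
  have inflow_swap: "inflow k = (\<Sum>i\<in>V. tt i a k * (\<Sum>j\<in>V. ph i (Some j) a k * p j a k))" for k
    unfolding inflow_def sum_distrib_left by (subst sum.swap) (simp add: mult_ac)
  have stage_0: "(\<Sum>i\<in>V. p i a 0 * tt i a 0) = inflow 0 + admitted"
  proof -
    have "p i a 0 * tt i a 0 = p i a 0 * (\<Sum>j\<in>V. tt j a 0 * ph j (Some i) a 0) + p i a 0 * rr i a"
      if "i \<in> V" for i
      using tr a that unfolding traffic_def by (simp add: distrib_left)
    then show ?thesis
      unfolding inflow_def admitted_def by (simp add: sum.distrib)
  qed
  have stage_Suc: "(\<Sum>i\<in>V. p i a (Suc k) * tt i a (Suc k)) = inflow (Suc k) + processed k"
    if "k < K a" for k
  proof -
    have "p i a (Suc k) * tt i a (Suc k)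
        = p i a (Suc k) * (\<Sum>j\<in>V. tt j a (Suc k) * ph j (Some i) a (Suc k))
          + tt i a k * ph i None a k * p i a (k + 1)" if "i \<in> V" for i
      using tr a \<open>k < K a\<close> that unfolding traffic_def by (simp add: distrib_left mult_ac)
    then show ?thesis
      unfolding inflow_def processed_def by (simp add: sum.distrib)
  qed
  have "processed (K a) = 0"
  proof -
    have "ph i None a (K a) = 0" if "i \<in> V" for i
      using fc a that unfolding flow_cons_def by blast
    then show ?thesis
      unfolding processed_def by (simp add: sum.neutral)
  qed
  then have processed_all: "(\<Sum>k<K a. processed k) = (\<Sum>k\<le>K a. processed k)"
    by (simp add: lessThan_Suc_atMost[symmetric])
  have "(\<Sum>k\<le>K a. \<Sum>i\<in>V. p i a k * tt i a k)
      = (\<Sum>i\<in>V. p i a 0 * tt i a 0) + (\<Sum>k<K a. \<Sum>i\<in>V. p i a (Suc k) * tt i a (Suc k))"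
    by (rule sum.atMost_shift)
  also have "\<dots> = inflow 0 + admitted + (\<Sum>k<K a. inflow (Suc k) + processed k)"
    using stage_0 stage_Suc by simp
  also have "\<dots> = (\<Sum>k\<le>K a. inflow k) + (\<Sum>k\<le>K a. processed k) + admitted"
    by (simp add: sum.distrib sum.atMost_shift[of inflow] processed_all)
  finally show ?thesis
    by (simp add: inflow_swap processed_def admitted_def)
qed

definition linearised_cost ::
  "'v set \<Rightarrow> ('v \<times> 'v) set \<Rightarrow> 'a set \<Rightarrow> ('a \<Rightarrow> nat) \<Rightarrow> ('a \<Rightarrow> nat \<Rightarrow> real)
   \<Rightarrow> ('v \<Rightarrow> 'a \<Rightarrow> nat \<Rightarrow> real) \<Rightarrow> ('v \<Rightarrow> 'v \<Rightarrow> real) \<Rightarrow> ('v \<Rightarrow> real)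
   \<Rightarrow> ('v \<Rightarrow> 'v option \<Rightarrow> 'a \<Rightarrow> nat \<Rightarrow> real) \<Rightarrow> ('v \<Rightarrow> 'a \<Rightarrow> nat \<Rightarrow> real) \<Rightarrow> real" where
  "linearised_cost V E A K L w \<alpha> \<beta> ph tt =
     (\<Sum>(i, j)\<in>E. \<alpha> i j * link_flow A K L ph tt i j) + (\<Sum>i\<in>V. \<beta> i * comp_load A K w ph tt i)"

lemma linearised_cost_eq_stage_sum:
  assumes V: "finite V" and E: "E \<subseteq> V \<times> V" and fc: "flow_cons V E A d K ph"
  shows "linearised_cost V E A K L w \<alpha> \<beta> ph tt
    = (\<Sum>a\<in>A. \<Sum>k\<le>K a. \<Sum>i\<in>V. tt i a k * (\<Sum>j\<in>V. ph i (Some j) a k * L a k * \<alpha> i j))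
      + (\<Sum>a\<in>A. \<Sum>k\<le>K a. \<Sum>i\<in>V. tt i a k * ph i None a k * w i a k * \<beta> i)"
proof -
  have "link_flow A K L ph tt i j = 0" if "(i, j) \<in> V \<times> V - E" for i j
    using that fc unfolding link_flow_def flow_cons_def by (auto intro!: sum.neutral)
  then have "(\<Sum>(i, j)\<in>E. \<alpha> i j * link_flow A K L ph tt i j)
      = (\<Sum>i\<in>V. \<Sum>j\<in>V. \<alpha> i j * link_flow A K L ph tt i j)"
    using V E by (subst sum.cartesian_product) (rule sum.mono_neutral_left; auto)
  also have "\<dots> = (\<Sum>i\<in>V. \<Sum>a\<in>A. \<Sum>k\<le>K a. \<Sum>j\<in>V. tt i a k * ph i (Some j) a k * L a k * \<alpha> i j)"
    unfolding link_flow_def sum_distrib_left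
    by (intro sum.cong refl, subst sum.swap, intro sum.cong refl, subst sum.swap) (simp add: mult_ac)
  also have "\<dots> = (\<Sum>a\<in>A. \<Sum>k\<le>K a. \<Sum>i\<in>V. tt i a k * (\<Sum>j\<in>V. ph i (Some j) a k * L a k * \<alpha> i j))"
    by (subst sum.swap, intro sum.cong refl, subst sum.swap) (simp add: sum_distrib_left mult_ac)
  finally have links: "(\<Sum>(i, j)\<in>E. \<alpha> i j * link_flow A K L ph tt i j) = \<dots>" .
  have "(\<Sum>i\<in>V. \<beta> i * comp_load A K w ph tt i)
      = (\<Sum>a\<in>A. \<Sum>k\<le>K a. \<Sum>i\<in>V. tt i a k * ph i None a k * w i a k * \<beta> i)"
    unfolding comp_load_def sum_distrib_left
    by (subst sum.swap, intro sum.cong refl, subst sum.swap) (simp add: mult_ac)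
  with links show ?thesis
    unfolding linearised_cost_def by simp
qed

lemma linearised_cost_eq:
  assumes V: "finite V" and E: "E \<subseteq> V \<times> V"
    and fc: "flow_cons V E A d K ph" and tr: "traffic V A K ph rr tt"
  shows "linearised_cost V E A K L w \<alpha> \<beta> ph tt
    = (\<Sum>a\<in>A. \<Sum>k\<le>K a. \<Sum>i\<in>V. tt i a k * (stage_marginal V L w \<alpha> \<beta> p ph i a k - p i a k))
      + (\<Sum>a\<in>A. \<Sum>i\<in>V. p i a 0 * rr i a)"
proof -
  have "(\<Sum>k\<le>K a. \<Sum>i\<in>V. tt i a k * (stage_marginal V L w \<alpha> \<beta> p ph i a k - p i a k))
      + (\<Sum>i\<in>V. p i a 0 * rr i a)
    = (\<Sum>k\<le>K a. \<Sum>i\<in>V. tt i a k * (\<Sum>j\<in>V. ph i (Some j) a k * L a k * \<alpha> i j))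
      + (\<Sum>k\<le>K a. \<Sum>i\<in>V. tt i a k * ph i None a k * w i a k * \<beta> i)" if a: "a \<in> A" for a
    using traffic_telescope[OF tr fc a, of p] V
    by (simp add: stage_marginal_expand algebra_simps sum.distrib sum_subtractf sum_distrib_left)
  then show ?thesis
    using linearised_cost_eq_stage_sum[OF V E fc] by (simp add: sum.distrib[symmetric])
qed

lemma linearised_cost_at_marginals:
  assumes marg: "marginals V A d K L w Dd Cd phi t p"
    and fc: "flow_cons V E A d K phi" and tr: "traffic V A K phi r t"
    and V: "finite V" and E: "E \<subseteq> V \<times> V"
  shows "linearised_cost V E A K L w (\<lambda>i j. Dd i j (link_flow A K L phi t i j))
           (\<lambda>i. Cd i (comp_load A K w phi t i)) phi t = (\<Sum>a\<in>A. \<Sum>i\<in>V. p i a 0 * r i a)"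
  using stage_marginal_eq_marginal[OF marg fc V]
  by (simp add: linearised_cost_eq[OF V E fc tr, of _ _ _ _ p])

lemma linearised_cost_ge_admitted:
  assumes marg: "marginals V A d K L w Dd Cd phi t p" and SC: "cond_SC V E A K L w Dd Cd phi t p"
    and fc: "flow_cons V E A d K phi" and fc': "flow_cons V E A d K phi'"
    and tr': "traffic V A K phi' r' t'" and V: "finite V" and E: "E \<subseteq> V \<times> V"
  shows "(\<Sum>a\<in>A. \<Sum>i\<in>V. p i a 0 * r' i a)
    \<le> linearised_cost V E A K L w (\<lambda>i j. Dd i j (link_flow A K L phi t i j))
           (\<lambda>i. Cd i (comp_load A K w phi t i)) phi' t'"
proof -
  have "0 \<le> t' i a k * (stage_marginal V L w (\<lambda>i j. Dd i j (link_flow A K L phi t i j))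
           (\<lambda>i. Cd i (comp_load A K w phi t i)) p phi' i a k - p i a k)"
    if "a \<in> A" "k \<le> K a" "i \<in> V" for a k i
    using marginal_le_stage_marginal[OF marg SC fc fc' V that] tr' that
    unfolding traffic_def by simp
  then show ?thesis
    by (auto simp: linearised_cost_eq[OF V E fc' tr', of _ _ _ _ p] intro!: sum_nonneg)
qed

lemma total_cost_increment_ge_linearised:
  assumes Dcost: "\<forall>(i, j)\<in>E. cost_function (Ddom i j) (D i j) (Dd i j)"
    and Ccost: "\<forall>i\<in>V. cost_function (Cdom i) (C i) (Cd i)"
    and feas: "feasible V E A d K L w Ddom Cdom r phi t"
    and feas': "feasible V E A d K L w Ddom Cdom r' phi' t'"
  defines "lin \<equiv> linearised_cost V E A K L w (\<lambda>i j. Dd i j (link_flow A K L phi t i j))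
                   (\<lambda>i. Cd i (comp_load A K w phi t i))"
  shows "lin phi' t' - lin phi t
    \<le> total_cost V E A K L w D C phi' t' - total_cost V E A K L w D C phi t"
proof -
  let ?F = "link_flow A K L phi t" and ?F' = "link_flow A K L phi' t'"
  let ?G = "comp_load A K w phi t" and ?G' = "comp_load A K w phi' t'"
  have "(\<Sum>(i, j)\<in>E. Dd i j (?F i j) * (?F' i j - ?F i j))
      \<le> (\<Sum>(i, j)\<in>E. D i j (?F' i j) - D i j (?F i j))"
    using Dcost feas feas' unfolding feasible_def
    by (intro sum_mono) (auto intro: cost_function_above_tangent)
  moreover have "(\<Sum>i\<in>V. Cd i (?G i) * (?G' i - ?G i)) \<le> (\<Sum>i\<in>V. C i (?G' i) - C i (?G i))"
    using Ccost feas feas' unfolding feasible_def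
    by (intro sum_mono) (auto intro: cost_function_above_tangent)
  ultimately show ?thesis
    unfolding lin_def linearised_cost_def total_cost_def
    by (simp add: case_prod_beta right_diff_distrib sum_subtractf)
qed

theorem theorem5:
  fixes V :: "'v set" and E :: "('v \<times> 'v) set" and A :: "'a set"
    and d :: "'a \<Rightarrow> 'v" and K :: "'a \<Rightarrow> nat"
    and L :: "'a \<Rightarrow> nat \<Rightarrow> real" and w :: "'v \<Rightarrow> 'a \<Rightarrow> nat \<Rightarrow> real"
    and D Dd :: "'v \<Rightarrow> 'v \<Rightarrow> real \<Rightarrow> real" and Ddom :: "'v \<Rightarrow> 'v \<Rightarrow> real set"
    and C Cd :: "'v \<Rightarrow> real \<Rightarrow> real" and Cdom :: "'v \<Rightarrow> real set"
    and rbar :: "'v \<Rightarrow> 'a \<Rightarrow> real" and U U' :: "'v \<Rightarrow> 'a \<Rightarrow> real \<Rightarrow> real"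
    and r :: "'v \<Rightarrow> 'a \<Rightarrow> real" and phi :: "'v \<Rightarrow> 'v option \<Rightarrow> 'a \<Rightarrow> nat \<Rightarrow> real"
    and t :: "'v \<Rightarrow> 'a \<Rightarrow> nat \<Rightarrow> real"
    and phiV phiR :: "'v \<Rightarrow> 'a \<Rightarrow> real"
    and p :: "'v \<Rightarrow> 'a \<Rightarrow> nat \<Rightarrow> real"
  assumes graph: "graph_ok V E"
    and finA: "finite A"
    and dest: "\<forall>a\<in>A. d a \<in> V"
    and Lpos: "\<forall>a\<in>A. \<forall>k\<le>K a. L a k > 0"
    and wpos: "\<forall>i\<in>V. \<forall>a\<in>A. \<forall>k\<le>K a. w i a k > 0"
    and Dcost: "\<forall>(i, j)\<in>E. cost_function (Ddom i j) (D i j) (Dd i j)"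
    and Ccost: "\<forall>i\<in>V. cost_function (Cdom i) (C i) (Cd i)"
    and rbar_nonneg: "\<forall>i\<in>V. \<forall>a\<in>A. rbar i a \<ge> 0"
    and util: "\<forall>i\<in>V. \<forall>a\<in>A. utility_function (rbar i a) (U i a) (U' i a)"
    and adm: "\<forall>i\<in>V. \<forall>a\<in>A. phiV i a \<ge> 0 \<and> phiR i a \<ge> 0 \<and> phiV i a + phiR i a = 1
                              \<and> r i a = phiV i a * rbar i a"
    and feas: "feasible V E A d K L w Ddom Cdom r phi t"
    and marg: "marginals V A d K L w Dd Cd phi t p"
    and SC: "cond_SC V E A K L w Dd Cd phi t p"
    and admit_cond: "\<forall>i\<in>V. \<forall>a\<in>A. phiV i a > 0 \<longrightarrow> p i a 0 \<le> U' i a (r i a)"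
    and reject_cond: "\<forall>i\<in>V. \<forall>a\<in>A. phiR i a > 0 \<longrightarrow> p i a 0 \<ge> U' i a (r i a)"
  shows "\<forall>r' phi' t'.
           (\<forall>i\<in>V. \<forall>a\<in>A. 0 \<le> r' i a \<and> r' i a \<le> rbar i a)
           \<and> feasible V E A d K L w Ddom Cdom r' phi' t'
           \<longrightarrow> objective V E A K L w D C U r' phi' t' \<le> objective V E A K L w D C U r phi t"
proof (intro allI impI, elim conjE)
  fix r' phi' t'
  assume bounds: "\<forall>i\<in>V. \<forall>a\<in>A. 0 \<le> r' i a \<and> r' i a \<le> rbar i a"
    and feas': "feasible V E A d K L w Ddom Cdom r' phi' t'"
  have V: "finite V" and E: "E \<subseteq> V \<times> V"
    using graph unfolding graph_ok_def by auto
  have fc: "flow_cons V E A d K phi" and tr: "traffic V A K phi r t"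
    and fc': "flow_cons V E A d K phi'" and tr': "traffic V A K phi' r' t'"
    using feas feas' unfolding feasible_def by auto
  define lin where "lin = linearised_cost V E A K L w (\<lambda>i j. Dd i j (link_flow A K L phi t i j))
                            (\<lambda>i. Cd i (comp_load A K w phi t i))"
  have "lin phi t = (\<Sum>a\<in>A. \<Sum>i\<in>V. p i a 0 * r i a)"
    unfolding lin_def by (rule linearised_cost_at_marginals[OF marg fc tr V E])
  moreover have "(\<Sum>a\<in>A. \<Sum>i\<in>V. p i a 0 * r' i a) \<le> lin phi' t'"
    unfolding lin_def by (rule linearised_cost_ge_admitted[OF marg SC fc fc' tr' V E])
  moreover have "lin phi' t' - lin phi t
      \<le> total_cost V E A K L w D C phi' t' - total_cost V E A K L w D C phi t"
    unfolding lin_def by (rule total_cost_increment_ge_linearised[OF Dcost Ccost feas feas'])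
  moreover have "(\<Sum>i\<in>V. \<Sum>a\<in>A. U i a (r' i a) - U i a (r i a))
      \<le> (\<Sum>i\<in>V. \<Sum>a\<in>A. p i a 0 * (r' i a - r i a))"
    using util rbar_nonneg adm bounds admit_cond reject_cond
    by (intro sum_mono admission_utility_increment_le[where \<phi>V = "phiV _ _" and \<phi>R = "phiR _ _"]) auto
  moreover have "(\<Sum>i\<in>V. \<Sum>a\<in>A. p i a 0 * (r' i a - r i a))
      = (\<Sum>a\<in>A. \<Sum>i\<in>V. p i a 0 * r' i a) - (\<Sum>a\<in>A. \<Sum>i\<in>V. p i a 0 * r i a)"
    by (subst sum.swap) (simp add: right_diff_distrib sum_subtractf)
  ultimately show "objective V E A K L w D C U r' phi' t' \<le> objective V E A K L w D C U r phi t"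
    unfolding objective_def by (simp add: sum_subtractf)
qed

end
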